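(* For every integer $n\geq1$, $\mathrm{C}_{\sharp=n}\leq_W\mathrm{C}_\mathbb{N}$.
   Context: Represented spaces carry partial surjections $\delta:\subseteq\mathbb{N}^\mathbb{N}\to X$; a realizer $F$ of $f$ satisfies $\delta_YF(p)\in f(\delta_X(p))$ for $p\in\operatorname{dom}(f\delta_X)$. $f\leq_W g$ iff there are computable partial $K,H$ on Baire space such that $p\mapsto K\langle p,G(H(p))\rangle$ realizes $f$ for every realizer $G$ of $g$. $\mathrm{C}_\mathbb{N}$ is closed choice on $\mathbb{N}$: given a non-empty $A\subseteq\mathbb{N}$ via an enumeration of $\mathbb{N}\setminus A$, output an element of $A$. Closed subsets of Cantor space are named by binary trees (set of infinite paths); $\mathrm{C}_{\sharp=n}$ is the restriction of $\mathrm{C}_{\{0,1\}^\mathbb{N}}$ (output any point of the closed set) to trees having exactly $n$ vertices at each level $k$ with $2^k\geq n$ and in which, from some finite depth on, every vertex has exactly one child. *)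

theory Defs
  imports Main "HOL-Library.Nat_Bijection" "HOL-Library.Sublist"
begin

type_synonym baire = "nat \<Rightarrow> nat"

inductive PR :: "nat \<Rightarrow> (nat list \<Rightarrow> nat) \<Rightarrow> bool" where
  PR_zero: "PR n (\<lambda>_. 0)"
| PR_succ: "PR 1 (\<lambda>xs. Suc (hd xs))"
| PR_proj: "i < n \<Longrightarrow> PR n (\<lambda>xs. xs ! i)"
| PR_comp: "PR m g \<Longrightarrow> length hs = m \<Longrightarrow> (\<forall>h\<in>set hs. PR n h)
            \<Longrightarrow> PR n (\<lambda>xs. g (map (\<lambda>h. h xs) hs))"
| PR_rec: "PR n g \<Longrightarrow> PR (Suc (Suc n)) h
            \<Longrightarrow> PR (Suc n) (\<lambda>xs. rec_nat (g (tl xs)) (\<lambda>k acc. h (k # acc # tl xs)) (hd xs))"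

definition pre :: "baire \<Rightarrow> nat \<Rightarrow> nat list" where
  "pre p n = map p [0..<n]"

text \<open>A computable monotone word function (Type-2 machine): prefix-monotone and
  primitive recursive via the coding of finite sequences.\<close>
definition cmachine :: "(nat list \<Rightarrow> nat list) \<Rightarrow> bool" where
  "cmachine M \<longleftrightarrow> (\<forall>u v. prefix u v \<longrightarrow> prefix (M u) (M v))
     \<and> (\<exists>h. PR 1 h \<and> (\<forall>u. M u = list_decode (h [list_encode u])))"

definition converges :: "(nat list \<Rightarrow> nat list) \<Rightarrow> baire \<Rightarrow> bool" where
  "converges M p \<longleftrightarrow> (\<forall>k. \<exists>n. k < length (M (pre p n)))"

definition run :: "(nat list \<Rightarrow> nat list) \<Rightarrow> baire \<Rightarrow> baire option" where
  "run M p = (if converges M p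
     then Some (\<lambda>k. M (pre p (LEAST n. k < length (M (pre p n)))) ! k) else None)"

definition computable_partial :: "(baire \<Rightarrow> baire option) \<Rightarrow> bool" where
  "computable_partial F \<longleftrightarrow> (\<exists>M. cmachine M \<and> F = run M)"

definition pairB :: "baire \<Rightarrow> baire \<Rightarrow> baire" where
  "pairB p q = (\<lambda>i. if even i then p (i div 2) else q (i div 2))"

text \<open>A representation: the domain of names together with the naming map.\<close>
type_synonym 'a rep = "baire set \<times> (baire \<Rightarrow> 'a)"

definition realizes :: "'a rep \<Rightarrow> 'b rep \<Rightarrow> ('a \<Rightarrow> 'b set) \<Rightarrow> (baire \<Rightarrow> baire option) \<Rightarrow> bool" where
  "realizes X Y f F \<longleftrightarrow>
     (\<forall>p\<in>fst X. f (snd X p) \<noteq> {} \<longrightarrow>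
        (\<exists>q. F p = Some q \<and> q \<in> fst Y \<and> snd Y q \<in> f (snd X p)))"

definition weihrauch_le ::
  "'a rep \<Rightarrow> 'b rep \<Rightarrow> ('a \<Rightarrow> 'b set) \<Rightarrow> 'c rep \<Rightarrow> 'd rep \<Rightarrow> ('c \<Rightarrow> 'd set) \<Rightarrow> bool" where
  "weihrauch_le X Y f Z W g \<longleftrightarrow>
     (\<exists>K H. computable_partial K \<and> computable_partial H \<and>
        (\<forall>G. realizes Z W g G \<longrightarrow>
           realizes X Y f (\<lambda>p. Option.bind (H p) (\<lambda>r. Option.bind (G r) (\<lambda>s. K (pairB p s))))))"

text \<open>Closed subsets of N, named by enumerations of the complement
  (n is listed by the value n+1; the value 0 means "nothing").\<close>
definition rep_closedN :: "nat set rep" where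
  "rep_closedN = (UNIV, \<lambda>p. {m. \<forall>k. p k \<noteq> Suc m})"

definition rep_nat :: "nat rep" where
  "rep_nat = (UNIV, \<lambda>p. p 0)"

definition C_N :: "nat set \<Rightarrow> nat set" where
  "C_N A = A"

definition binary_trees_name :: "baire \<Rightarrow> bool list set" where
  "binary_trees_name p = {w. p (list_encode (map of_bool w)) = 1}"

definition rep_tree :: "bool list set rep" where
  "rep_tree = ({p. (\<forall>k. p k \<le> 1) \<and>
                    (\<forall>w v. w \<in> binary_trees_name p \<longrightarrow> prefix v w \<longrightarrow> v \<in> binary_trees_name p)},
               binary_trees_name)"

definition rep_cantor :: "(nat \<Rightarrow> bool) rep" where
  "rep_cantor = ({p. \<forall>i. p i \<le> 1}, \<lambda>p i. p i = 1)"

definition paths :: "bool list set \<Rightarrow> (nat \<Rightarrow> bool) set" where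
  "paths T = {x. \<forall>m. map x [0..<m] \<in> T}"

definition sharp_tree :: "nat \<Rightarrow> bool list set \<Rightarrow> bool" where
  "sharp_tree n T \<longleftrightarrow>
     (\<forall>k. n \<le> 2 ^ k \<longrightarrow> card {w\<in>T. length w = k} = n)
   \<and> (\<exists>d. \<forall>w\<in>T. d \<le> length w \<longrightarrow> card {b. w @ [b] \<in> T} = 1)"

definition C_sharp :: "nat \<Rightarrow> bool list set \<Rightarrow> (nat \<Rightarrow> bool) set" where
  "C_sharp n T = (if sharp_tree n T then paths T else {})"

end

theory Submission
  imports Defs
begin

text \<open>A tree in the domain of \<open>C_sharp n\<close> has, from some depth \<open>d\<close> on, exactly one child at
  every vertex, so every vertex of depth \<open>d\<close> on a path is unbranching: every vertex of the tree
  above it has exactly one child. That a code is not the code of an unbranching vertex is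
  witnessed by a finite part of the name of the tree (the word is not in the tree, or some vertex
  above it has zero or two children). Hence the codes of unbranching vertices form a nonempty
  closed subset of \<open>\<nat>\<close> whose complement is computably enumerable from the name; closed choice
  picks one of them, and from it the path is computed by always moving to the unique child.\<close>

section \<open>Primitive recursion up to extensional equality\<close>

definition prim_rec :: "nat \<Rightarrow> (nat list \<Rightarrow> nat) \<Rightarrow> bool" where
  "prim_rec n f \<longleftrightarrow> (\<exists>g. PR n g \<and> (\<forall>xs. length xs = n \<longrightarrow> g xs = f xs))"

lemma prim_rec_cong:
  "prim_rec n f \<Longrightarrow> (\<And>xs. length xs = n \<Longrightarrow> f xs = g xs) \<Longrightarrow> prim_rec n g"
  unfolding prim_rec_def by metis

lemma PR_imp_prim_rec: "PR n f \<Longrightarrow> prim_rec n f"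
  unfolding prim_rec_def by auto

lemma prim_rec_proj: "i < n \<Longrightarrow> prim_rec n (\<lambda>xs. xs ! i)"
  by (intro PR_imp_prim_rec PR_proj)

lemma prim_rec_comp_list:
  assumes F: "prim_rec k F" and E: "\<And>i. i < k \<Longrightarrow> prim_rec m (\<lambda>ys. E ys ! i)"
    and len: "\<And>ys. length ys = m \<Longrightarrow> length (E ys) = k"
  shows "prim_rec m (\<lambda>ys. F (E ys))"
proof -
  obtain F' where F': "PR k F'" "\<And>xs. length xs = k \<Longrightarrow> F' xs = F xs"
    using F unfolding prim_rec_def by blast
  have "\<forall>i\<in>{..<k}. \<exists>g. PR m g \<and> (\<forall>ys. length ys = m \<longrightarrow> g ys = E ys ! i)"
    using E unfolding prim_rec_def by blast
  then obtain E' where E': "\<forall>i\<in>{..<k}. PR m (E' i) \<and> (\<forall>ys. length ys = m \<longrightarrow> E' i ys = E ys ! i)"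
    by (auto dest!: bchoice)
  have "map (\<lambda>h. h ys) (map E' [0..<k]) = E ys" if "length ys = m" for ys
    using E' len[OF that] that by (auto intro: nth_equalityI)
  then have eq: "F' (map (\<lambda>h. h ys) (map E' [0..<k])) = F (E ys)" if "length ys = m" for ys
    using F'(2) len that by simp
  have "PR m (\<lambda>ys. F' (map (\<lambda>h. h ys) (map E' [0..<k])))"
    using F' E' by (intro PR_comp) auto
  then show ?thesis
    by (rule prim_rec_cong[OF PR_imp_prim_rec]) (rule eq)
qed

lemma prim_rec_tl:
  assumes "prim_rec n a"
  shows "prim_rec (Suc n) (\<lambda>ys. a (tl ys))"
proof (rule prim_rec_comp_list[OF assms])
  fix i assume "i < n"
  then have "prim_rec (Suc n) (\<lambda>ys. ys ! Suc i)"
    by (intro prim_rec_proj) simp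
  then show "prim_rec (Suc n) (\<lambda>ys. tl ys ! i)"
    by (rule prim_rec_cong) (use \<open>i < n\<close> in \<open>simp add: nth_tl\<close>)
qed simp

lemma prim_rec_Suc:
  assumes "prim_rec n a"
  shows "prim_rec n (\<lambda>xs. Suc (a xs))"
  using prim_rec_comp_list[OF PR_imp_prim_rec[OF PR_succ], of n "\<lambda>xs. [a xs]"] assms
  by (simp add: less_Suc_eq_0_disj)

lemma prim_rec_const: "prim_rec n (\<lambda>_. c)"
  by (induction c) (auto intro: PR_imp_prim_rec PR_zero prim_rec_Suc)

lemma prim_rec_rec_nat:
  assumes G: "prim_rec n G" and H: "prim_rec (Suc (Suc n)) (\<lambda>ys. H (ys!0) (ys!1) (tl (tl ys)))"
    and T: "prim_rec n T"
  shows "prim_rec n (\<lambda>xs. rec_nat (G xs) (\<lambda>k acc. H k acc xs) (T xs))"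
proof -
  obtain G' H' where G': "PR n G'" "\<And>xs. length xs = n \<Longrightarrow> G' xs = G xs"
    and H': "PR (Suc (Suc n)) H'"
      "\<And>ys. length ys = Suc (Suc n) \<Longrightarrow> H' ys = H (ys!0) (ys!1) (tl (tl ys))"
    using G H unfolding prim_rec_def by blast
  have eq: "rec_nat (G' (tl ys)) (\<lambda>k acc. H' (k # acc # tl ys)) j
      = rec_nat (G (tl ys)) (\<lambda>k acc. H k acc (tl ys)) j" if "length ys = Suc n" for ys j
    using that G' H' by (induction j) auto
  have "prim_rec (Suc n) (\<lambda>ys. rec_nat (G (tl ys)) (\<lambda>k acc. H k acc (tl ys)) (hd ys))"
    by (rule prim_rec_cong[OF PR_imp_prim_rec[OF PR_rec[OF G'(1) H'(1)]]]) (simp add: eq)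
  then have "prim_rec n (\<lambda>xs. (\<lambda>ys. rec_nat (G (tl ys)) (\<lambda>k acc. H k acc (tl ys)) (hd ys)) (T xs # xs))"
  proof (rule prim_rec_comp_list)
    fix i assume "i < Suc n"
    then show "prim_rec n (\<lambda>xs. (T xs # xs) ! i)"
      by (cases i) (auto intro: T prim_rec_proj)
  qed simp
  then show ?thesis by simp
qed

lemma prim_rec_funpow:
  assumes "prim_rec n a" "prim_rec (Suc (Suc n)) (\<lambda>ys. F (tl (tl ys)) (ys!1))" "prim_rec n k"
  shows "prim_rec n (\<lambda>xs. (F xs ^^ k xs) (a xs))"
proof -
  have "(f ^^ j) x = rec_nat x (\<lambda>_ acc. f acc) j" for f :: "nat \<Rightarrow> nat" and x j
    by (induction j) auto
  with prim_rec_rec_nat[where H="\<lambda>_ acc xs. F xs acc", OF assms] show ?thesis by simp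
qed

lemma prim_rec_subst_head:
  assumes f: "prim_rec (Suc n) (\<lambda>ys. f (ys!0) (tl ys))" and e: "prim_rec (Suc (Suc n)) e"
  shows "prim_rec (Suc (Suc n)) (\<lambda>ys. f (e ys) (tl (tl ys)))"
proof -
  have "prim_rec (Suc (Suc n)) (\<lambda>ys. (\<lambda>zs. f (zs!0) (tl zs)) (e ys # tl (tl ys)))"
  proof (rule prim_rec_comp_list[OF f])
    fix i assume "i < Suc n"
    then show "prim_rec (Suc (Suc n)) (\<lambda>ys. (e ys # tl (tl ys)) ! i)"
      by (cases i) (simp_all add: e, intro prim_rec_tl prim_rec_proj, simp)
  qed simp
  then show ?thesis by simp
qed

lemma prim_rec_add:
  assumes "prim_rec n a" "prim_rec n b"
  shows "prim_rec n (\<lambda>xs. a xs + b xs)"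
proof -
  have eq: "rec_nat y (\<lambda>_ acc. Suc acc) x = x + y" for x y :: nat
    by (induction x) auto
  have "prim_rec n (\<lambda>xs. rec_nat (b xs) (\<lambda>_ acc. Suc acc) (a xs))"
    by (intro prim_rec_rec_nat[where H="\<lambda>_ acc _. Suc acc"] assms prim_rec_Suc prim_rec_proj) simp
  then show ?thesis by (simp add: eq)
qed

lemma prim_rec_mult:
  assumes "prim_rec n a" "prim_rec n b"
  shows "prim_rec n (\<lambda>xs. a xs * b xs)"
proof -
  have eq: "rec_nat 0 (\<lambda>_ acc. acc + y) x = x * y" for x y :: nat
    by (induction x) auto
  have "prim_rec n (\<lambda>xs. rec_nat 0 (\<lambda>_ acc. acc + b xs) (a xs))"
    by (intro prim_rec_rec_nat[where H="\<lambda>_ acc xs. acc + b xs"] assms prim_rec_const prim_rec_add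
        prim_rec_tl prim_rec_proj) simp
  then show ?thesis by (simp add: eq)
qed

lemma prim_rec_diff:
  assumes "prim_rec n a" "prim_rec n b"
  shows "prim_rec n (\<lambda>xs. a xs - b xs)"
proof -
  have pred: "prim_rec m (\<lambda>xs. c xs - 1)" if "prim_rec m c" for m c
  proof -
    have "rec_nat 0 (\<lambda>k _. k) x = x - 1" for x :: nat
      by (cases x) auto
    moreover have "prim_rec m (\<lambda>xs. rec_nat 0 (\<lambda>k _. k) (c xs))"
      by (intro prim_rec_rec_nat[where H="\<lambda>k _ _. k"] that prim_rec_const prim_rec_proj) simp
    ultimately show ?thesis by simp
  qed
  have eq: "rec_nat x (\<lambda>_ acc. acc - Suc 0) y = x - y" for x y :: nat
    by (induction y) auto
  have "prim_rec n (\<lambda>xs. rec_nat (a xs) (\<lambda>_ acc. acc - 1) (b xs))"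
    by (intro prim_rec_rec_nat[where H="\<lambda>_ acc _. acc - 1"] assms pred prim_rec_proj) simp
  then show ?thesis by (simp add: eq)
qed

definition prim_rec_pred :: "nat \<Rightarrow> (nat list \<Rightarrow> bool) \<Rightarrow> bool" where
  "prim_rec_pred n P \<longleftrightarrow> prim_rec n (\<lambda>xs. of_bool (P xs))"

lemma prim_rec_of_bool: "prim_rec_pred n P \<Longrightarrow> prim_rec n (\<lambda>xs. of_bool (P xs))"
  by (simp add: prim_rec_pred_def)

lemma prim_rec_pred_le:
  "prim_rec n a \<Longrightarrow> prim_rec n b \<Longrightarrow> prim_rec_pred n (\<lambda>xs. a xs \<le> b xs)"
  unfolding prim_rec_pred_def
  by (rule prim_rec_cong[of _ "\<lambda>xs. 1 - (a xs - b xs)"]) (auto intro!: prim_rec_diff prim_rec_const)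

lemma prim_rec_pred_not: "prim_rec_pred n P \<Longrightarrow> prim_rec_pred n (\<lambda>xs. \<not> P xs)"
  unfolding prim_rec_pred_def
  by (rule prim_rec_cong[of _ "\<lambda>xs. 1 - of_bool (P xs)"]) (auto intro!: prim_rec_diff prim_rec_const)

lemma prim_rec_pred_less:
  "prim_rec n a \<Longrightarrow> prim_rec n b \<Longrightarrow> prim_rec_pred n (\<lambda>xs. a xs < b xs)"
  using prim_rec_pred_not[OF prim_rec_pred_le, of n b a] by (simp add: not_le)

lemma prim_rec_pred_conj:
  "prim_rec_pred n P \<Longrightarrow> prim_rec_pred n Q \<Longrightarrow> prim_rec_pred n (\<lambda>xs. P xs \<and> Q xs)"
  unfolding prim_rec_pred_def
  by (rule prim_rec_cong[of _ "\<lambda>xs. of_bool (P xs) * of_bool (Q xs)"]) (auto intro!: prim_rec_mult)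

lemma prim_rec_pred_disj:
  "prim_rec_pred n P \<Longrightarrow> prim_rec_pred n Q \<Longrightarrow> prim_rec_pred n (\<lambda>xs. P xs \<or> Q xs)"
  using prim_rec_pred_not[OF prim_rec_pred_conj[OF prim_rec_pred_not prim_rec_pred_not], of n P Q]
  by simp

lemma prim_rec_pred_eq:
  "prim_rec n a \<Longrightarrow> prim_rec n b \<Longrightarrow> prim_rec_pred n (\<lambda>xs. a xs = b xs)"
  using prim_rec_pred_conj[OF prim_rec_pred_le prim_rec_pred_le, of n a b b a]
  by (simp add: order_eq_iff)

lemma prim_rec_pred_iff:
  assumes "prim_rec_pred n P" "prim_rec_pred n Q"
  shows "prim_rec_pred n (\<lambda>xs. P xs \<longleftrightarrow> Q xs)"
proof -
  have "prim_rec_pred n (\<lambda>xs. of_bool (P xs) = (of_bool (Q xs) :: nat))"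
    by (rule prim_rec_pred_eq) (use assms in \<open>simp_all add: prim_rec_pred_def\<close>)
  then show ?thesis
    unfolding prim_rec_pred_def by (rule prim_rec_cong) simp
qed

lemma prim_rec_If:
  "prim_rec_pred n P \<Longrightarrow> prim_rec n a \<Longrightarrow> prim_rec n b \<Longrightarrow> prim_rec n (\<lambda>xs. if P xs then a xs else b xs)"
  unfolding prim_rec_pred_def
  by (rule prim_rec_cong[of _ "\<lambda>xs. of_bool (P xs) * a xs + (1 - of_bool (P xs)) * b xs"])
     (auto intro!: prim_rec_diff prim_rec_add prim_rec_mult prim_rec_const)

lemma prim_rec_sum:
  assumes f: "prim_rec (Suc n) (\<lambda>ys. f (ys!0) (tl ys))" and T: "prim_rec n T"
  shows "prim_rec n (\<lambda>xs. \<Sum>j<T xs. f j xs)"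
proof -
  have eq: "rec_nat 0 (\<lambda>k acc. acc + f k xs) j = (\<Sum>i<j. f i xs)" for xs j
    by (induction j) auto
  have "prim_rec n (\<lambda>xs. rec_nat 0 (\<lambda>k acc. acc + f k xs) (T xs))"
    by (intro prim_rec_rec_nat[where H="\<lambda>k acc xs. acc + f k xs"] T prim_rec_const prim_rec_add
        prim_rec_proj prim_rec_subst_head[OF f]) simp_all
  then show ?thesis by (simp add: eq)
qed

lemma prim_rec_pred_bex:
  assumes P: "prim_rec_pred (Suc n) (\<lambda>ys. P (ys!0) (tl ys))" and T: "prim_rec n T"
  shows "prim_rec_pred n (\<lambda>xs. \<exists>j<T xs. P j xs)"
proof -
  have "(\<exists>j<t. Q j) \<longleftrightarrow> 1 \<le> (\<Sum>j<t. of_bool (Q j) :: nat)" for t :: nat and Q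
    by (induction t) (auto simp: less_Suc_eq)
  moreover have "prim_rec_pred n (\<lambda>xs. 1 \<le> (\<Sum>j<T xs. of_bool (P j xs) :: nat))"
    by (intro prim_rec_pred_le prim_rec_const prim_rec_sum T P[unfolded prim_rec_pred_def])
  ultimately show ?thesis by simp
qed

lemma prim_rec_pred_ball:
  assumes P: "prim_rec_pred (Suc n) (\<lambda>ys. P (ys!0) (tl ys))" and T: "prim_rec n T"
  shows "prim_rec_pred n (\<lambda>xs. \<forall>j<T xs. P j xs)"
  using prim_rec_pred_not[OF prim_rec_pred_bex[OF prim_rec_pred_not[OF P] T]] by simp

lemma prim_rec_unique_below:
  assumes P: "prim_rec_pred (Suc n) (\<lambda>ys. P (ys!0) (tl ys))" and T: "prim_rec n T"
    and f: "\<And>xs. length xs = n \<Longrightarrow> f xs < T xs \<and> (\<forall>j<T xs. P j xs \<longleftrightarrow> j = f xs)"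
  shows "prim_rec n f"
proof -
  have "prim_rec n (\<lambda>xs. \<Sum>j<T xs. j * of_bool (P j xs))"
    using P unfolding prim_rec_pred_def by (intro prim_rec_sum T prim_rec_mult prim_rec_proj) auto
  moreover have "(\<Sum>j<T xs. j * of_bool (P j xs)) = f xs" if "length xs = n" for xs
  proof -
    have "(\<Sum>j<T xs. j * of_bool (P j xs)) = (\<Sum>j<T xs. if j = f xs then f xs else 0)"
      using f[OF that] by (intro sum.cong) auto
    then show ?thesis using f[OF that] by simp
  qed
  ultimately show ?thesis by (rule prim_rec_cong)
qed

lemma prim_rec_prod_encode:
  assumes "prim_rec n a" "prim_rec n b"
  shows "prim_rec n (\<lambda>xs. prod_encode (a xs, b xs))"
proof -
  have "triangle m = (\<Sum>j<Suc m. j)" for m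
    by (induction m) auto
  moreover have "prim_rec n (\<lambda>xs. (\<Sum>j<Suc (a xs + b xs). j) + a xs)"
    by (intro prim_rec_add prim_rec_sum prim_rec_Suc prim_rec_proj assms) auto
  ultimately show ?thesis by (simp add: prod_encode_def)
qed

lemma prim_rec_prod_decode:
  assumes a: "prim_rec n a"
  shows "prim_rec n (\<lambda>xs. fst (prod_decode (a xs)))" "prim_rec n (\<lambda>xs. snd (prod_decode (a xs)))"
proof -
  have sel:
    "fst (prod_decode m) < Suc m \<and>
       (\<forall>j<Suc m. (\<exists>y<Suc m. prod_encode (j, y) = m) \<longleftrightarrow> j = fst (prod_decode m))"
    "snd (prod_decode m) < Suc m \<and>
       (\<forall>j<Suc m. (\<exists>x<Suc m. prod_encode (x, j) = m) \<longleftrightarrow> j = snd (prod_decode m))" for m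
  proof -
    obtain x y where xy: "prod_decode m = (x, y)" by fastforce
    then have m: "m = prod_encode (x, y)" by (metis prod_decode_inverse)
    have "x < Suc m" "y < Suc m"
      using m le_prod_encode_1 le_prod_encode_2 by (simp_all add: less_Suc_eq_le)
    then show "fst (prod_decode m) < Suc m \<and>
       (\<forall>j<Suc m. (\<exists>y<Suc m. prod_encode (j, y) = m) \<longleftrightarrow> j = fst (prod_decode m))"
      "snd (prod_decode m) < Suc m \<and>
       (\<forall>j<Suc m. (\<exists>x<Suc m. prod_encode (x, j) = m) \<longleftrightarrow> j = snd (prod_decode m))"
      using xy m by (auto simp: prod_encode_eq)
  qed
  show "prim_rec n (\<lambda>xs. fst (prod_decode (a xs)))"
  proof (rule prim_rec_unique_below[where P="\<lambda>j xs. \<exists>y<Suc (a xs). prod_encode (j, y) = a xs"])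
    show "prim_rec_pred (Suc n) (\<lambda>ys. \<exists>y<Suc (a (tl ys)). prod_encode (ys!0, y) = a (tl ys))"
      by (intro prim_rec_pred_bex prim_rec_pred_eq prim_rec_prod_encode prim_rec_Suc prim_rec_tl a
          prim_rec_proj) auto
    show "prim_rec n (\<lambda>xs. Suc (a xs))" by (rule prim_rec_Suc[OF a])
  qed (rule sel)
  show "prim_rec n (\<lambda>xs. snd (prod_decode (a xs)))"
  proof (rule prim_rec_unique_below[where P="\<lambda>j xs. \<exists>x<Suc (a xs). prod_encode (x, j) = a xs"])
    show "prim_rec_pred (Suc n) (\<lambda>ys. \<exists>x<Suc (a (tl ys)). prod_encode (x, ys!0) = a (tl ys))"
      by (intro prim_rec_pred_bex prim_rec_pred_eq prim_rec_prod_encode prim_rec_Suc prim_rec_tl a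
          prim_rec_proj) auto
    show "prim_rec n (\<lambda>xs. Suc (a xs))" by (rule prim_rec_Suc[OF a])
  qed (rule sel)
qed

section \<open>Operations on codes of lists\<close>

text \<open>These definitions use only bounded recursion and bounded sums, so that they are visibly
  primitive recursive; the search in \<open>length_code\<close> is bounded by the code itself because a
  list is never longer than its code.\<close>

definition tl_code :: "nat \<Rightarrow> nat" where
  "tl_code c = snd (prod_decode (c - 1))"

definition drop_code :: "nat \<Rightarrow> nat \<Rightarrow> nat" where
  "drop_code c k = (tl_code ^^ k) c"

definition length_code :: "nat \<Rightarrow> nat" where
  "length_code c = (\<Sum>k<c. of_bool (drop_code c k \<noteq> 0))"

definition nth_code :: "nat \<Rightarrow> nat \<Rightarrow> nat" where
  "nth_code c i = (if i < length_code c then fst (prod_decode (drop_code c i - 1)) else 0)"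

definition snoc_code :: "nat \<Rightarrow> nat \<Rightarrow> nat" where
  "snoc_code c b =
     list_encode (map (\<lambda>i. if i < length_code c then nth_code c i else b) [0..<Suc (length_code c)])"

lemma list_decode_tl_code: "list_decode (tl_code c) = tl (list_decode c)"
proof (cases c)
  case 0
  then show ?thesis by (simp add: tl_code_def prod_decode_def prod_decode_aux.simps)
qed (simp add: tl_code_def split: prod.split)

lemma list_decode_drop_code: "list_decode (drop_code c k) = drop k (list_decode c)"
  by (induction k) (auto simp: drop_code_def list_decode_tl_code drop_Suc tl_drop)

lemma list_decode_eq_Nil_iff: "list_decode c = [] \<longleftrightarrow> c = 0"
  by (metis list_decode.simps(1) list_decode_inverse list_encode.simps(1))

lemma length_list_decode_le: "length (list_decode c) \<le> c"
proof (induction c rule: list_decode.induct)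
  case (2 n)
  obtain x y where xy: "prod_decode n = (x, y)" by fastforce
  then have "y \<le> n" by (metis le_prod_encode_2 prod_decode_inverse)
  then show ?case using 2[OF xy[symmetric]] xy by simp
qed simp

lemma length_code_eq: "length_code c = length (list_decode c)"
proof -
  have "drop_code c k \<noteq> 0 \<longleftrightarrow> k < length (list_decode c)" for k
    by (metis list_decode_drop_code list_decode_eq_Nil_iff drop_eq_Nil not_le)
  then have "length_code c = card {k. k < c \<and> k < length (list_decode c)}"
    unfolding length_code_def by (simp add: sum.If_cases Int_def conj_commute)
  also have "{k. k < c \<and> k < length (list_decode c)} = {..<length (list_decode c)}"
    using length_list_decode_le[of c] by auto
  finally show ?thesis by simp
qed

lemma nth_code_eq: "nth_code c i = (if i < length (list_decode c) then list_decode c ! i else 0)"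
proof (cases "i < length (list_decode c)")
  case True
  then have "list_decode (drop_code c i) \<noteq> []"
    by (simp add: list_decode_drop_code)
  then obtain m where m: "drop_code c i = Suc m"
    by (metis list_decode_eq_Nil_iff not0_implies_Suc)
  have "list_decode (Suc m) = fst (prod_decode m) # list_decode (snd (prod_decode m))"
    by (simp split: prod.split)
  then have "list_decode c ! i = fst (prod_decode m)"
    using True m list_decode_drop_code[of c i] by (metis hd_drop_conv_nth list.sel(1))
  then show ?thesis using True m by (simp add: nth_code_def length_code_eq)
qed (simp add: nth_code_def length_code_eq)

lemma length_code_list_encode [simp]: "length_code (list_encode u) = length u"
  by (simp add: length_code_eq)

lemma nth_code_list_encode [simp]:
  "nth_code (list_encode u) i = (if i < length u then u ! i else 0)"
  by (simp add: nth_code_eq)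

lemma list_decode_snoc_code [simp]: "list_decode (snoc_code c b) = list_decode c @ [b]"
proof -
  have "map (\<lambda>i. if i < length (list_decode c) then nth_code c i else b) [0..<Suc (length (list_decode c))]
      = list_decode c @ [b]"
    by (rule nth_equalityI) (auto simp: nth_append nth_code_eq less_Suc_eq)
  then show ?thesis
    unfolding snoc_code_def length_code_eq list_encode_inverse .
qed

lemma prim_rec_tl_code:
  assumes "prim_rec n a"
  shows "prim_rec n (\<lambda>xs. tl_code (a xs))"
  unfolding tl_code_def by (intro prim_rec_prod_decode prim_rec_diff prim_rec_const assms)

lemma prim_rec_drop_code:
  assumes "prim_rec n a" "prim_rec n b"
  shows "prim_rec n (\<lambda>xs. drop_code (a xs) (b xs))"
  unfolding drop_code_def
  by (intro prim_rec_funpow[where F="\<lambda>_. tl_code"] prim_rec_tl_code prim_rec_proj assms) simp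

lemma prim_rec_length_code:
  assumes "prim_rec n a"
  shows "prim_rec n (\<lambda>xs. length_code (a xs))"
  unfolding length_code_def
  by (intro prim_rec_sum[where f="\<lambda>k xs. of_bool (drop_code (a xs) k \<noteq> 0)"] prim_rec_of_bool
      prim_rec_pred_not prim_rec_pred_eq prim_rec_drop_code prim_rec_tl prim_rec_proj prim_rec_const
      assms) simp

lemma prim_rec_nth_code:
  assumes "prim_rec n a" "prim_rec n b"
  shows "prim_rec n (\<lambda>xs. nth_code (a xs) (b xs))"
  unfolding nth_code_def
  by (intro prim_rec_If prim_rec_pred_less prim_rec_length_code prim_rec_prod_decode prim_rec_diff
      prim_rec_drop_code prim_rec_const assms)

text \<open>The list is built from its last element backwards, since \<open>list_encode\<close> conses onto the
  code of the tail.\<close>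

lemma prim_rec_list_encode_map:
  assumes f: "prim_rec (Suc n) (\<lambda>ys. f (ys!0) (tl ys))" and T: "prim_rec n T"
  shows "prim_rec n (\<lambda>xs. list_encode (map (\<lambda>i. f i xs) [0..<T xs]))"
proof -
  have eq: "rec_nat 0 (\<lambda>k acc. Suc (prod_encode (f (T xs - Suc k) xs, acc))) k
      = list_encode (map (\<lambda>i. f i xs) [T xs - k..<T xs])" if "k \<le> T xs" for xs k
    using that
  proof (induction k)
    case (Suc k)
    then have "[T xs - Suc k..<T xs] = (T xs - Suc k) # [T xs - k..<T xs]"
      by (metis Suc_diff_Suc Suc_le_lessD diff_less upt_conv_Cons zero_less_Suc less_le_trans)
    then show ?case using Suc by simp
  qed simp
  have "prim_rec n (\<lambda>xs. rec_nat 0 (\<lambda>k acc. Suc (prod_encode (f (T xs - Suc k) xs, acc))) (T xs))"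
    by (intro prim_rec_rec_nat[where H="\<lambda>k acc xs. Suc (prod_encode (f (T xs - Suc k) xs, acc))"]
        T prim_rec_const prim_rec_Suc prim_rec_prod_encode prim_rec_subst_head[OF f] prim_rec_diff
        prim_rec_tl prim_rec_proj) simp_all
  then show ?thesis
    by (rule prim_rec_cong) (simp add: eq)
qed

lemma prim_rec_snoc_code:
  "prim_rec n a \<Longrightarrow> prim_rec n b \<Longrightarrow> prim_rec n (\<lambda>xs. snoc_code (a xs) (b xs))"
  unfolding snoc_code_def
  by (intro prim_rec_list_encode_map[where
        f="\<lambda>i xs. if i < length_code (a xs) then nth_code (a xs) i else b xs"]
      prim_rec_If prim_rec_pred_less prim_rec_length_code prim_rec_nth_code prim_rec_Suc
      prim_rec_tl prim_rec_proj) simp_all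

lemma cmachine_of_prim_rec:
  assumes mono: "\<And>u v. prefix u v \<Longrightarrow> prefix (M u) (M v)"
    and pr: "prim_rec 1 (\<lambda>xs. f (xs ! 0))" and M: "\<And>u. M u = list_decode (f (list_encode u))"
  shows "cmachine M"
proof -
  obtain g where "PR 1 g" "\<And>xs. length xs = 1 \<Longrightarrow> g xs = f (xs ! 0)"
    using pr unfolding prim_rec_def by blast
  then show ?thesis
    unfolding cmachine_def by (intro conjI allI impI mono exI[of _ g]) (simp_all add: M)
qed

lemma run_eqI:
  assumes "\<And>k. \<exists>n. k < length (M (pre p n))"
    and "\<And>n k. k < length (M (pre p n)) \<Longrightarrow> M (pre p n) ! k = q k"
  shows "run M p = Some q"
proof -
  have "M (pre p (LEAST n. k < length (M (pre p n)))) ! k = q k" for k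
    using LeastI_ex[OF assms(1)] by (rule assms(2))
  then show ?thesis
    using assms(1) by (simp add: run_def converges_def)
qed

lemma pairB_even [simp]: "pairB p s (2 * x) = p x"
  by (simp add: pairB_def)

lemma pairB_Suc_0 [simp]: "pairB p s (Suc 0) = s 0"
  by (simp add: pairB_def)

section \<open>Nodes of binary trees from which the tree does not branch\<close>

definition bits_code :: "nat \<Rightarrow> bool" where
  "bits_code c \<longleftrightarrow> (\<forall>x\<in>set (list_decode c). x \<le> 1)"

definition bits_of :: "nat \<Rightarrow> bool list" where
  "bits_of c = map (\<lambda>x. x = 1) (list_decode c)"

lemma bits_code_encode: "bits_code (list_encode (map of_bool w))"
  by (auto simp: bits_code_def)

lemma bits_of_encode [simp]: "bits_of (list_encode (map of_bool w)) = w"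
  by (induction w) (auto simp: bits_of_def)

lemma encode_bits_of:
  assumes "bits_code c"
  shows "list_encode (map of_bool (bits_of c)) = c"
proof -
  have "map (of_bool \<circ> (\<lambda>x. x = 1)) (list_decode c) = list_decode c"
    using assms by (intro map_idI) (fastforce simp: bits_code_def le_Suc_eq)
  then show ?thesis by (simp add: bits_of_def)
qed

lemma bits_code_snoc_code: "bits_code (snoc_code c b) \<longleftrightarrow> bits_code c \<and> b \<le> 1"
  by (auto simp: bits_code_def)

lemma bits_of_snoc_code [simp]: "bits_of (snoc_code c b) = bits_of c @ [b = 1]"
  by (simp add: bits_of_def)

lemma prefix_iff_nth:
  "prefix xs ys \<longleftrightarrow> length xs \<le> length ys \<and> (\<forall>j<length xs. xs ! j = ys ! j)"
proof
  show "prefix xs ys \<Longrightarrow> length xs \<le> length ys \<and> (\<forall>j<length xs. xs ! j = ys ! j)"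
    by (auto simp: prefix_def nth_append)
  assume "length xs \<le> length ys \<and> (\<forall>j<length xs. xs ! j = ys ! j)"
  then have "xs = take (length xs) ys" by (auto intro: nth_equalityI)
  then show "prefix xs ys" by (metis take_is_prefix)
qed

lemma prefix_bits_of_iff:
  assumes "bits_code m" "bits_code c"
  shows "prefix (bits_of m) (bits_of c) \<longleftrightarrow> prefix (list_decode m) (list_decode c)"
proof
  show "prefix (bits_of m) (bits_of c) \<Longrightarrow> prefix (list_decode m) (list_decode c)"
    by (metis assms encode_bits_of list_encode_inverse map_mono_prefix)
qed (simp add: bits_of_def map_mono_prefix)

lemma mem_binary_trees_name: "bits_code c \<Longrightarrow> bits_of c \<in> binary_trees_name p \<longleftrightarrow> p c = 1"
  by (simp add: binary_trees_name_def encode_bits_of)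

lemma prim_rec_pred_bits_code:
  assumes "prim_rec n a"
  shows "prim_rec_pred n (\<lambda>xs. bits_code (a xs))"
proof -
  have "bits_code c \<longleftrightarrow> (\<forall>j<length_code c. nth_code c j \<le> 1)" for c
    by (simp add: bits_code_def length_code_eq nth_code_eq all_set_conv_all_nth)
  moreover have "prim_rec_pred n (\<lambda>xs. \<forall>j<length_code (a xs). nth_code (a xs) j \<le> 1)"
    by (intro prim_rec_pred_ball[where P="\<lambda>j xs. nth_code (a xs) j \<le> 1"] prim_rec_pred_le
        prim_rec_nth_code prim_rec_length_code prim_rec_tl prim_rec_proj prim_rec_const assms) simp
  ultimately show ?thesis by simp
qed

lemma prim_rec_pred_prefix_list_decode:
  assumes "prim_rec n a" "prim_rec n b"
  shows "prim_rec_pred n (\<lambda>xs. prefix (list_decode (a xs)) (list_decode (b xs)))"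
proof -
  have "prefix (list_decode c) (list_decode d) \<longleftrightarrow>
      length_code c \<le> length_code d \<and> (\<forall>j<length_code c. nth_code c j = nth_code d j)" for c d
    by (auto simp: prefix_iff_nth length_code_eq nth_code_eq)
  moreover have "prim_rec_pred n (\<lambda>xs. length_code (a xs) \<le> length_code (b xs) \<and>
      (\<forall>j<length_code (a xs). nth_code (a xs) j = nth_code (b xs) j))"
    by (intro prim_rec_pred_conj prim_rec_pred_le prim_rec_length_code
        prim_rec_pred_ball[where P="\<lambda>j xs. nth_code (a xs) j = nth_code (b xs) j"]
        prim_rec_pred_eq prim_rec_nth_code prim_rec_tl prim_rec_proj assms) simp_all
  ultimately show ?thesis by simp
qed

definition unbranching_node :: "bool list set \<Rightarrow> bool list \<Rightarrow> bool" where
  "unbranching_node T w \<longleftrightarrow> w \<in> T \<and> (\<forall>v\<in>T. prefix w v \<longrightarrow> (v @ [True] \<in> T \<longleftrightarrow> v @ [False] \<notin> T))"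

definition good_code :: "bool list set \<Rightarrow> nat \<Rightarrow> bool" where
  "good_code T m \<longleftrightarrow> bits_code m \<and> unbranching_node T (bits_of m)"

lemma unbranching_node_exists:
  assumes unique: "\<And>w. w \<in> T \<Longrightarrow> d \<le> length w \<Longrightarrow> card {b. w @ [b] \<in> T} = 1"
    and x: "x \<in> paths T"
  shows "unbranching_node T (map x [0..<d])"
  unfolding unbranching_node_def
proof (intro conjI ballI impI)
  show "map x [0..<d] \<in> T" using x by (simp add: paths_def)
  fix v assume v: "v \<in> T" "prefix (map x [0..<d]) v"
  then have "card {b. v @ [b] \<in> T} = 1"
    using prefix_length_le unique by fastforce
  then obtain b where "{c. v @ [c] \<in> T} = {b}" by (auto simp: card_1_singleton_iff)
  then show "v @ [True] \<in> T \<longleftrightarrow> v @ [False] \<notin> T" by (cases b) auto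
qed

text \<open>A certificate, reading only entries of the tree name \<open>p\<close> below \<open>i\<close>, that \<open>m\<close> is not a
  good code.\<close>

definition refuted :: "baire \<Rightarrow> nat \<Rightarrow> nat \<Rightarrow> bool" where
  "refuted p i m \<longleftrightarrow> \<not> bits_code m \<or> (m < i \<and> p m \<noteq> 1) \<or>
     (\<exists>c<i. bits_code c \<and> prefix (list_decode m) (list_decode c) \<and> snoc_code c 1 < i \<and>
        snoc_code c 0 < i \<and> p c = 1 \<and> (p (snoc_code c 1) = 1 \<longleftrightarrow> p (snoc_code c 0) = 1))"

lemma refuted_cong: "(\<And>c. c < i \<Longrightarrow> p c = p' c) \<Longrightarrow> refuted p i m \<longleftrightarrow> refuted p' i m"
  unfolding refuted_def by (auto 0 4)

lemma refuted_mono: "refuted p i m \<Longrightarrow> i \<le> i' \<Longrightarrow> refuted p i' m"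
  unfolding refuted_def by (auto 0 3)

lemma child_mem_binary_trees_name:
  "bits_code c \<Longrightarrow> bits_of c @ [b] \<in> binary_trees_name p \<longleftrightarrow> p (snoc_code c (of_bool b)) = 1"
  by (cases b)
     (use mem_binary_trees_name[of "snoc_code c (of_bool b)" p] in \<open>simp_all add: bits_code_snoc_code\<close>)

lemma refuted_iff_not_good_code:
  "(\<exists>i. refuted p i m) \<longleftrightarrow> \<not> good_code (binary_trees_name p) m"
proof
  let ?T = "binary_trees_name p"
  assume "\<exists>i. refuted p i m"
  then obtain i where "refuted p i m" ..
  then consider "\<not> bits_code m" | "bits_code m" "p m \<noteq> 1"
    | c where "bits_code m" "bits_code c" "prefix (bits_of m) (bits_of c)" "bits_of c \<in> ?T"
        "bits_of c @ [True] \<in> ?T \<longleftrightarrow> bits_of c @ [False] \<in> ?T"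
    unfolding refuted_def
    by (metis of_bool_eq(1,2) prefix_bits_of_iff mem_binary_trees_name child_mem_binary_trees_name)
  then show "\<not> good_code ?T m"
    by cases (auto simp: good_code_def unbranching_node_def mem_binary_trees_name)
next
  let ?T = "binary_trees_name p"
  assume bad: "\<not> good_code ?T m"
  show "\<exists>i. refuted p i m"
  proof (cases "bits_code m \<and> bits_of m \<in> ?T")
    case False
    then have "refuted p (Suc m) m"
      by (auto simp: refuted_def mem_binary_trees_name)
    then show ?thesis ..
  next
    case True
    with bad obtain v where v: "v \<in> ?T" "prefix (bits_of m) v"
      "v @ [True] \<in> ?T \<longleftrightarrow> v @ [False] \<in> ?T"
      unfolding good_code_def unbranching_node_def by blast
    define c where "c = list_encode (map of_bool v)"
    have c: "bits_code c" "bits_of c = v"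
      by (simp_all add: c_def bits_code_encode)
    then have "refuted p (Suc (c + snoc_code c 1 + snoc_code c 0)) m"
      using v True prefix_bits_of_iff[of m c] mem_binary_trees_name[of c p]
        child_mem_binary_trees_name[of c _ p]
      unfolding refuted_def by (intro disjI2 exI[of _ c]) auto
    then show ?thesis ..
  qed
qed

lemma prim_rec_pred_refuted:
  assumes "prim_rec n a" "prim_rec n b" "prim_rec n c"
  shows "prim_rec_pred n (\<lambda>xs. refuted (nth_code (a xs)) (b xs) (c xs))"
  unfolding refuted_def
  by (intro prim_rec_pred_disj prim_rec_pred_not prim_rec_pred_conj prim_rec_pred_bits_code
      prim_rec_pred_less prim_rec_pred_eq prim_rec_pred_iff prim_rec_pred_prefix_list_decode
      prim_rec_pred_bex[where P="\<lambda>j xs. bits_code j \<and> prefix (list_decode (c xs)) (list_decode j) \<and>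
        snoc_code j 1 < b xs \<and> snoc_code j 0 < b xs \<and> nth_code (a xs) j = 1 \<and>
        (nth_code (a xs) (snoc_code j 1) = 1 \<longleftrightarrow> nth_code (a xs) (snoc_code j 0) = 1)"]
      prim_rec_nth_code prim_rec_snoc_code prim_rec_tl prim_rec_proj prim_rec_const assms) simp_all

section \<open>Enumerating the codes that are not good\<close>

text \<open>Entry \<open>k = prod_encode (m, i)\<close> lists \<open>m\<close> if the first \<open>k\<close> entries of \<open>p\<close> refute it;
  as \<open>i \<le> k\<close>, every \<open>m\<close> refuted by some \<open>i\<close> gets listed.\<close>

definition bad_code_enum :: "baire \<Rightarrow> nat \<Rightarrow> nat" where
  "bad_code_enum p k =
     (if refuted p k (fst (prod_decode k)) then Suc (fst (prod_decode k)) else 0)"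

lemma bad_code_enum_names_good_codes:
  "snd rep_closedN (bad_code_enum p) = {m. good_code (binary_trees_name p) m}"
proof -
  have "(\<exists>k. bad_code_enum p k = Suc m) \<longleftrightarrow> (\<exists>i. refuted p i m)" for m
  proof
    assume "\<exists>i. refuted p i m"
    then obtain i where "refuted p i m" ..
    then have "refuted p (prod_encode (m, i)) m"
      by (rule refuted_mono) (rule le_prod_encode_2)
    then have "bad_code_enum p (prod_encode (m, i)) = Suc m"
      by (simp add: bad_code_enum_def)
    then show "\<exists>k. bad_code_enum p k = Suc m" ..
  qed (auto simp: bad_code_enum_def split: if_splits)
  then show ?thesis
    by (auto simp: rep_closedN_def refuted_iff_not_good_code)
qed

definition enum_machine :: "nat list \<Rightarrow> nat list" where
  "enum_machine u = map (bad_code_enum (nth_code (list_encode u))) [0..<length u]"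

lemma bad_code_enum_cong:
  assumes "\<And>c. c < k \<Longrightarrow> p c = p' c"
  shows "bad_code_enum p k = bad_code_enum p' k"
  using refuted_cong[where i=k and p=p and p'=p', OF assms] by (simp add: bad_code_enum_def)

lemma cmachine_enum_machine: "cmachine enum_machine"
proof (rule cmachine_of_prim_rec)
  show "prefix (enum_machine u) (enum_machine v)" if uv: "prefix u v" for u v
  proof -
    obtain w where v: "v = u @ w" using uv by (auto simp: prefix_def)
    have "bad_code_enum (nth_code (list_encode v)) k = bad_code_enum (nth_code (list_encode u)) k"
      if "k < length u" for k
      using that by (intro bad_code_enum_cong) (simp add: v nth_append)
    then have "enum_machine v = enum_machine u @ map (bad_code_enum (nth_code (list_encode v)))
        [length u..<length v]"
      by (simp add: enum_machine_def v upt_add_eq_append[of 0 "length u"] del: nth_code_list_encode)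
    then show ?thesis by simp
  qed
  have "prim_rec (Suc 1) (\<lambda>ys. tl ys ! 0)"
    by (intro prim_rec_tl prim_rec_proj) simp
  then have "prim_rec (Suc 1) (\<lambda>ys. bad_code_enum (nth_code (tl ys ! 0)) (ys ! 0))"
    unfolding bad_code_enum_def
    by (intro prim_rec_If prim_rec_pred_refuted prim_rec_Suc prim_rec_prod_decode prim_rec_proj
        prim_rec_const) simp_all
  then show "prim_rec 1
      (\<lambda>xs. list_encode (map (bad_code_enum (nth_code (xs!0))) [0..<length_code (xs!0)]))"
    by (intro prim_rec_list_encode_map[where f="\<lambda>k xs. bad_code_enum (nth_code (xs!0)) k"]
        prim_rec_length_code prim_rec_proj) simp_all
qed (simp add: enum_machine_def del: nth_code_list_encode)

lemma run_enum_machine: "run enum_machine p = Some (bad_code_enum p)"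
proof (rule run_eqI)
  have len: "length (enum_machine (pre p n)) = n" for n
    by (simp add: enum_machine_def pre_def)
  then show "\<exists>n. k < length (enum_machine (pre p n))" for k
    by (intro exI[of _ "Suc k"]) simp
  show "enum_machine (pre p n) ! k = bad_code_enum p k" if "k < length (enum_machine (pre p n))" for n k
    using that len unfolding enum_machine_def by (auto intro!: bad_code_enum_cong simp: pre_def)
qed

section \<open>Following the tree from a node upwards\<close>

definition follow_step :: "baire \<Rightarrow> nat \<Rightarrow> nat" where
  "follow_step p a = (if p (snoc_code a 1) = 1 then snoc_code a 1 else snoc_code a 0)"

definition follow_path :: "baire \<Rightarrow> nat \<Rightarrow> nat \<Rightarrow> nat" where
  "follow_path p m i = list_decode ((follow_step p ^^ Suc i) m) ! i"

lemma list_decode_follow_step: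
  "list_decode (follow_step p a) = list_decode a @ [of_bool (p (snoc_code a 1) = 1)]"
  by (simp add: follow_step_def)

lemma funpow_prefix_mono:
  assumes step: "\<And>a. prefix (g a) (g (f a))" and "k \<le> k'"
  shows "prefix (g ((f ^^ k) a)) (g ((f ^^ k') a))"
  using assms(2)
proof (induction k' rule: dec_induct)
  case (step k')
  then show ?case
    using assms(1)[of "(f ^^ k') a"] by (auto intro: prefix_order.trans)
qed simp

lemma length_funpow_follow_step:
  "length (list_decode ((follow_step p ^^ k) m)) = length (list_decode m) + k"
  by (induction k) (simp_all add: list_decode_follow_step)

lemma nth_funpow_follow_step:
  assumes "i < length (list_decode ((follow_step p ^^ k) m))"
  shows "list_decode ((follow_step p ^^ k) m) ! i = follow_path p m i"
proof -
  have prefix: "prefix (list_decode ((follow_step p ^^ j) m)) (list_decode ((follow_step p ^^ j') m))"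
    if "j \<le> j'" for j j'
    using that by (rule funpow_prefix_mono[rotated]) (simp add: list_decode_follow_step)
  have "i < length (list_decode ((follow_step p ^^ Suc i) m))"
    by (simp add: length_funpow_follow_step del: funpow.simps)
  then show ?thesis
    using assms prefix[of k "Suc i"] prefix[of "Suc i" k]
    unfolding follow_path_def by (cases "k \<le> Suc i") (auto simp: prefix_iff_nth)
qed

lemma good_code_follow_step:
  assumes good: "good_code (binary_trees_name p) m"
  shows "good_code (binary_trees_name p) (follow_step p m)"
proof -
  let ?T = "binary_trees_name p" and ?b = "p (snoc_code m 1) = 1"
  have m: "bits_code m" "bits_of m \<in> ?T"
    and unique: "\<And>v. v \<in> ?T \<Longrightarrow> prefix (bits_of m) v \<Longrightarrow> v @ [True] \<in> ?T \<longleftrightarrow> v @ [False] \<notin> ?T"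
    using good by (auto simp: good_code_def unbranching_node_def)
  have bits: "bits_code (follow_step p m)" "bits_of (follow_step p m) = bits_of m @ [?b]"
    using m(1) by (simp_all add: follow_step_def bits_code_snoc_code)
  have "bits_of m @ [?b] \<in> ?T"
    using unique[OF m(2)] child_mem_binary_trees_name[OF m(1), of True p] by (cases ?b) auto
  moreover have "v @ [True] \<in> ?T \<longleftrightarrow> v @ [False] \<notin> ?T" if "v \<in> ?T" "prefix (bits_of m @ [?b]) v" for v
    using unique[OF that(1)] that(2) by (metis append_prefixD)
  ultimately show ?thesis
    using bits by (simp add: good_code_def unbranching_node_def)
qed

lemma good_code_funpow_follow_step:
  "good_code (binary_trees_name p) m \<Longrightarrow> good_code (binary_trees_name p) ((follow_step p ^^ k) m)"
  by (induction k) (simp_all add: good_code_follow_step)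

lemma follow_path_le_1:
  assumes "good_code (binary_trees_name p) m"
  shows "follow_path p m i \<le> 1"
proof -
  let ?a = "(follow_step p ^^ Suc i) m"
  have "bits_code ?a"
    using good_code_funpow_follow_step[OF assms] by (simp add: good_code_def del: funpow.simps)
  moreover have "i < length (list_decode ?a)"
    by (simp add: length_funpow_follow_step del: funpow.simps)
  ultimately show ?thesis
    unfolding follow_path_def bits_code_def by (meson nth_mem)
qed

lemma follow_path_mem_paths:
  assumes good: "good_code (binary_trees_name p) m"
    and closed: "\<And>w v. w \<in> binary_trees_name p \<Longrightarrow> prefix v w \<Longrightarrow> v \<in> binary_trees_name p"
  shows "(\<lambda>i. follow_path p m i = 1) \<in> paths (binary_trees_name p)"
  unfolding paths_def
proof (intro CollectI allI)
  fix k
  let ?a = "(follow_step p ^^ k) m"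
  have "bits_of ?a \<in> binary_trees_name p"
    using good_code_funpow_follow_step[OF good] by (simp add: good_code_def unbranching_node_def)
  moreover have "map (\<lambda>i. follow_path p m i = 1) [0..<k] = take k (bits_of ?a)"
    by (rule nth_equalityI)
       (simp_all add: bits_of_def length_funpow_follow_step nth_funpow_follow_step)
  ultimately show "map (\<lambda>i. follow_path p m i = 1) [0..<k] \<in> binary_trees_name p"
    using closed take_is_prefix by metis
qed

section \<open>The machine computing the path\<close>

text \<open>On a prefix \<open>U\<close> of the paired input \<open>pairB p s\<close> the tree name \<open>p\<close> sits at the even
  positions. A step waits, returning its argument unchanged, until the entry of \<open>p\<close> it needs has
  been read; the start node is \<open>s 0\<close>, the answer of closed choice, at position \<open>1\<close>.\<close>

definition path_step_code :: "nat \<Rightarrow> nat \<Rightarrow> nat" where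
  "path_step_code U a =
     (if 2 * snoc_code a 1 < length_code U then follow_step (\<lambda>c. nth_code U (2 * c)) a else a)"

definition path_machine :: "nat list \<Rightarrow> nat list" where
  "path_machine u =
     (if length u < 2 then [] else list_decode ((path_step_code (list_encode u) ^^ length u) (u ! 1)))"

lemma prefix_path_step_code: "prefix (list_decode a) (list_decode (path_step_code U a))"
  by (simp add: path_step_code_def list_decode_follow_step)

text \<open>Once the run on the shorter input stalls it stalls for good, while the run on the longer input
  can only go further.\<close>

lemma prefix_funpow_path_step_code:
  assumes "prefix u v"
  shows "prefix (list_decode ((path_step_code (list_encode u) ^^ k) a))
                (list_decode ((path_step_code (list_encode v) ^^ k) a))"
proof -
  let ?S = "path_step_code (list_encode u)" and ?S' = "path_step_code (list_encode v)"
  have same: "?S b = ?S' b" if "2 * snoc_code b 1 < length u" for b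
    using that assms by (simp add: path_step_code_def follow_step_def prefix_iff_nth)
  have stall: "?S b = ?S' b \<or> ?S b = b" for b
    using same[of b] by (auto simp: path_step_code_def)
  have "(?S ^^ k) a = (?S' ^^ k) a \<or>
      ?S ((?S ^^ k) a) = (?S ^^ k) a \<and> prefix (list_decode ((?S ^^ k) a)) (list_decode ((?S' ^^ k) a))"
  proof (induction k)
    case (Suc k)
    let ?b = "(?S ^^ k) a" and ?b' = "(?S' ^^ k) a"
    from Suc consider "?b = ?b'" | "?S ?b = ?b" "prefix (list_decode ?b) (list_decode ?b')"
      by blast
    then show ?case
    proof cases
      case 1
      then show ?thesis
        using stall[of ?b] prefix_path_step_code[of ?b "list_encode v"] by auto
    next
      case 2
      then show ?thesis
        using prefix_path_step_code[of ?b' "list_encode v"] by (auto intro: prefix_order.trans)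
    qed
  qed simp
  then show ?thesis by auto
qed

lemma path_machine_mono:
  assumes uv: "prefix u v"
  shows "prefix (path_machine u) (path_machine v)"
proof (cases "length u < 2")
  case False
  have len: "length u \<le> length v"
    using uv by (rule prefix_length_le)
  have start: "v ! 1 = u ! 1"
    using uv False by (auto simp: prefix_iff_nth)
  have "prefix (list_decode ((path_step_code (list_encode u) ^^ length u) (u ! 1)))
      (list_decode ((path_step_code (list_encode v) ^^ length u) (u ! 1)))"
    using uv by (rule prefix_funpow_path_step_code)
  also have "prefix \<dots> (list_decode ((path_step_code (list_encode v) ^^ length v) (u ! 1)))"
    using len by (rule funpow_prefix_mono[where g=list_decode, OF prefix_path_step_code])
  finally show ?thesis
    using False len start by (simp add: path_machine_def)
qed (simp add: path_machine_def)

lemma prim_rec_path_step_code: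
  assumes "prim_rec n a" "prim_rec n b"
  shows "prim_rec n (\<lambda>xs. path_step_code (a xs) (b xs))"
  unfolding path_step_code_def follow_step_def
  by (intro prim_rec_If prim_rec_pred_less prim_rec_pred_eq prim_rec_mult prim_rec_snoc_code
      prim_rec_length_code prim_rec_nth_code prim_rec_const assms)

lemma cmachine_path_machine: "cmachine path_machine"
proof (rule cmachine_of_prim_rec)
  show "prefix (path_machine u) (path_machine v)" if "prefix u v" for u v
    using that by (rule path_machine_mono)
  have "prim_rec (Suc (Suc 1)) (\<lambda>ys. path_step_code (tl (tl ys) ! 0) (ys ! 1))"
    by (intro prim_rec_path_step_code prim_rec_tl prim_rec_proj) simp_all
  then show "prim_rec 1 (\<lambda>xs. if length_code (xs!0) < 2 then 0
      else (path_step_code (xs!0) ^^ length_code (xs!0)) (nth_code (xs!0) 1))"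
    by (intro prim_rec_If prim_rec_pred_less prim_rec_length_code prim_rec_const prim_rec_proj
        prim_rec_funpow[where F="\<lambda>xs. path_step_code (xs!0)"] prim_rec_nth_code) simp_all
qed (simp add: path_machine_def)

lemma path_step_code_pre:
  "path_step_code (list_encode (pre (pairB p s) N)) a =
     (if 2 * snoc_code a 1 < N then follow_step p a else a)"
  by (simp add: path_step_code_def follow_step_def pre_def)

lemma funpow_path_step_code_pre:
  fixes p s :: baire and N :: nat
  defines "S \<equiv> path_step_code (list_encode (pre (pairB p s) N))"
  shows "\<exists>j. (S ^^ k) m = (follow_step p ^^ j) m"
    and "(\<And>j. j < k \<Longrightarrow> 2 * snoc_code ((follow_step p ^^ j) m) 1 < N) \<Longrightarrow>
      (S ^^ k) m = (follow_step p ^^ k) m"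
proof -
  show "\<exists>j. (S ^^ k) m = (follow_step p ^^ j) m"
  proof (induction k)
    case (Suc k)
    then obtain j where "(S ^^ k) m = (follow_step p ^^ j) m" ..
    then have "(S ^^ Suc k) m \<in> {(follow_step p ^^ j) m, (follow_step p ^^ Suc j) m}"
      by (simp add: S_def path_step_code_pre)
    then show ?case by blast
  qed (auto intro: exI[of _ 0])
  show "(\<And>j. j < k \<Longrightarrow> 2 * snoc_code ((follow_step p ^^ j) m) 1 < N) \<Longrightarrow>
      (S ^^ k) m = (follow_step p ^^ k) m"
    by (induction k) (simp_all add: S_def path_step_code_pre)
qed

lemma run_path_machine:
  fixes p s :: baire
  shows "run path_machine (pairB p s) = Some (follow_path p (s 0))"
proof (rule run_eqI)
  let ?q = "pairB p s" and ?m = "s 0"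
  let ?S = "\<lambda>N. path_step_code (list_encode (pre ?q N))"
  have out: "N \<ge> 2 \<Longrightarrow> path_machine (pre ?q N) = list_decode ((?S N ^^ N) ?m)" for N
    by (simp add: path_machine_def pre_def del: upt_Suc)
  show "\<exists>N. k < length (path_machine (pre ?q N))" for k
  proof -
    define N where "N = Suc k + 2 + (\<Sum>j<Suc k. 2 * snoc_code ((follow_step p ^^ j) ?m) 1)"
    have "2 * snoc_code ((follow_step p ^^ j) ?m) 1 < N" if "j < Suc k" for j
      using that member_le_sum[where i=j and A="{..<Suc k}"
          and f="\<lambda>j. 2 * snoc_code ((follow_step p ^^ j) ?m) 1"]
      unfolding N_def by simp
    then have "(?S N ^^ Suc k) ?m = (follow_step p ^^ Suc k) ?m"
      by (rule funpow_path_step_code_pre(2))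
    moreover have "prefix (list_decode ((?S N ^^ Suc k) ?m)) (list_decode ((?S N ^^ N) ?m))"
      by (rule funpow_prefix_mono[where g=list_decode and f="?S N", OF prefix_path_step_code])
         (simp add: N_def)
    moreover have "N \<ge> 2" by (simp add: N_def)
    ultimately have "Suc k \<le> length (path_machine (pre ?q N))"
      using out prefix_length_le length_funpow_follow_step[where p=p and k="Suc k" and m="?m"]
      by (metis le_add2 order.trans)
    then show ?thesis by (intro exI[of _ N]) simp
  qed
  show "path_machine (pre ?q N) ! k = follow_path p ?m k" if "k < length (path_machine (pre ?q N))" for N k
  proof -
    have "N \<ge> 2" using that by (auto simp: path_machine_def pre_def split: if_splits)
    moreover obtain j where "(?S N ^^ N) ?m = (follow_step p ^^ j) ?m"
      using funpow_path_step_code_pre(1) by blast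
    ultimately show ?thesis
      using that out nth_funpow_follow_step by metis
  qed
qed

lemma realizes_C_sharp_via_C_N:
  assumes G: "realizes rep_closedN rep_nat C_N G"
  shows "realizes rep_tree rep_cantor (C_sharp n)
    (\<lambda>p. Option.bind (run enum_machine p) (\<lambda>r. Option.bind (G r) (\<lambda>s. run path_machine (pairB p s))))"
  unfolding realizes_def
proof (intro ballI impI)
  fix p assume p: "p \<in> fst rep_tree" and ne: "C_sharp n (snd rep_tree p) \<noteq> {}"
  let ?T = "binary_trees_name p"
  have sharp: "sharp_tree n ?T" and "paths ?T \<noteq> {}"
    using ne by (auto simp: rep_tree_def C_sharp_def split: if_splits)
  then obtain x d where "x \<in> paths ?T"
    "\<And>w. w \<in> ?T \<Longrightarrow> d \<le> length w \<Longrightarrow> card {b. w @ [b] \<in> ?T} = 1"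
    unfolding sharp_tree_def by blast
  then have "good_code ?T (list_encode (map of_bool (map x [0..<d])))"
    by (simp add: good_code_def bits_code_encode unbranching_node_exists del: map_map)
  then have "C_N (snd rep_closedN (bad_code_enum p)) \<noteq> {}"
    by (auto simp: C_N_def bad_code_enum_names_good_codes)
  moreover have "bad_code_enum p \<in> fst rep_closedN"
    by (simp add: rep_closedN_def)
  ultimately obtain s where s: "G (bad_code_enum p) = Some s" "good_code ?T (s 0)"
    using G bad_code_enum_names_good_codes[of p]
    unfolding realizes_def by (auto simp: rep_nat_def C_N_def)
  have closed: "\<And>w v. w \<in> ?T \<Longrightarrow> prefix v w \<Longrightarrow> v \<in> ?T"
    using p by (simp add: rep_tree_def)
  show "\<exists>q. Option.bind (run enum_machine p) (\<lambda>r. Option.bind (G r) (\<lambda>s. run path_machine (pairB p s)))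
      = Some q \<and> q \<in> fst rep_cantor \<and> snd rep_cantor q \<in> C_sharp n (snd rep_tree p)"
    using s sharp follow_path_le_1[OF s(2)] follow_path_mem_paths[OF s(2) closed]
    by (simp add: run_enum_machine run_path_machine rep_cantor_def rep_tree_def C_sharp_def)
qed

theorem proposition23:
  fixes n :: nat
  assumes "1 \<le> n"
  shows "weihrauch_le rep_tree rep_cantor (C_sharp n) rep_closedN rep_nat C_N"
  unfolding weihrauch_le_def computable_partial_def
  by (intro exI[of _ "run path_machine"] exI[of _ "run enum_machine"] conjI allI impI
      realizes_C_sharp_via_C_N) (blast intro: cmachine_path_machine cmachine_enum_machine)+

end
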